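(* Let $N\in\mathbb{N}$ and $|\mu\rangle\in(\mathbb{R}^4)^{\otimes N}$ with $\mu_{1\cdots1}=1$ (equivalently, $\Pi^{(N)}_\mu$ is unital and trace-preserving). If $\Pi^{(N)}_\mu$ is entanglement breaking, then $\sum_{i_1,\dots,i_N}|\mu_{i_1\cdots i_N}|\le 2^N$.
   Context: Pauli matrices $\sigma_1=I_2$, $\sigma_2=\begin{pmatrix}0&1\\1&0\end{pmatrix}$, $\sigma_3=\begin{pmatrix}1&0\\0&-1\end{pmatrix}$, $\sigma_4=\begin{pmatrix}0&-i\\i&0\end{pmatrix}$; $\Pi^{(N)}_\mu(X)=\sum_{i_1,\dots,i_N}\frac{\mu_{i_1\cdots i_N}}{2^N}\mathrm{Tr}[(\sigma_{i_1}\otimes\cdots\otimes\sigma_{i_N})X]\sigma_{i_1}\otimes\cdots\otimes\sigma_{i_N}$ on $\mathcal{M}_2^{\otimes N}$. A linear map $L:\mathcal{M}_{d_1}\to\mathcal{M}_{d_2}$ is entanglement breaking if its Choi matrix $C_L=(\mathrm{id}_{d_1}\otimes L)(|\Omega\rangle\langle\Omega|)$, $|\Omega\rangle=\sum_{i=1}^{d_1}|i\rangle\otimes|i\rangle$, is separable, i.e. a finite sum $\sum_k A_k\otimes B_k$ with $A_k,B_k$ positive semidefinite. *)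

theory Defs
  imports Complex_Main "Jordan_Normal_Form.Matrix"
begin

definition kron :: "complex mat \<Rightarrow> complex mat \<Rightarrow> complex mat" where
  "kron A B = mat (dim_row A * dim_row B) (dim_col A * dim_col B)
     (\<lambda>(i,j). A $$ (i div dim_row B, j div dim_col B) * B $$ (i mod dim_row B, j mod dim_col B))"

(* Pauli matrices; index 0,1,2,3 corresponds to the paper's sigma_1..sigma_4 *)
definition pauli :: "nat \<Rightarrow> complex mat" where
  "pauli i = (if i = 0 then mat_of_rows_list 2 [[1,0],[0,1]]
              else if i = 1 then mat_of_rows_list 2 [[0,1],[1,0]]
              else if i = 2 then mat_of_rows_list 2 [[1,0],[0,-1]]
              else mat_of_rows_list 2 [[0,-\<i>],[\<i>,0]])"

definition pauli_string :: "nat list \<Rightarrow> complex mat" where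
  "pauli_string is = foldr (\<lambda>i M. kron (pauli i) M) is (1\<^sub>m 1)"

definition idx :: "nat \<Rightarrow> nat list set" where
  "idx N = {is. length is = N \<and> set is \<subseteq> {0..<4}}"

definition mtrace :: "complex mat \<Rightarrow> complex" where
  "mtrace A = (\<Sum>i<dim_row A. A $$ (i,i))"

definition PiMap :: "nat \<Rightarrow> (nat list \<Rightarrow> real) \<Rightarrow> complex mat \<Rightarrow> complex mat" where
  "PiMap N \<mu> X = mat (2^N) (2^N) (\<lambda>(r,c).
      \<Sum>is\<in>idx N. complex_of_real (\<mu> is / 2^N) * mtrace (pauli_string is * X) * pauli_string is $$ (r,c))"

definition unit_mat :: "nat \<Rightarrow> nat \<Rightarrow> nat \<Rightarrow> complex mat" where
  "unit_mat d i j = mat d d (\<lambda>(r,c). if r = i \<and> c = j then 1 else 0)"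

(* Choi matrix (id \<otimes> L)(|Omega><Omega|) = sum_{i,j} |i><j| \<otimes> L(|i><j|) *)
definition choi :: "nat \<Rightarrow> nat \<Rightarrow> (complex mat \<Rightarrow> complex mat) \<Rightarrow> complex mat" where
  "choi d1 d2 L = mat (d1*d2) (d1*d2)
     (\<lambda>(r,c). \<Sum>i<d1. \<Sum>j<d1. kron (unit_mat d1 i j) (L (unit_mat d1 i j)) $$ (r,c))"

definition psd :: "complex mat \<Rightarrow> bool" where
  "psd A \<longleftrightarrow> dim_row A = dim_col A \<and>
     (\<forall>v. dim_vec v = dim_col A \<longrightarrow>
        (let q = (\<Sum>i<dim_row A. \<Sum>j<dim_col A. cnj (v $ i) * A $$ (i,j) * v $ j)
         in Im q = 0 \<and> Re q \<ge> 0))"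

definition separable_op :: "nat \<Rightarrow> nat \<Rightarrow> complex mat \<Rightarrow> bool" where
  "separable_op d1 d2 C \<longleftrightarrow> (\<exists>(n::nat) A B.
     (\<forall>k<n. A k \<in> carrier_mat d1 d1 \<and> psd (A k) \<and> B k \<in> carrier_mat d2 d2 \<and> psd (B k)) \<and>
     C = mat (d1*d2) (d1*d2) (\<lambda>(r,c). \<Sum>k<n. kron (A k) (B k) $$ (r,c)))"

definition entanglement_breaking :: "nat \<Rightarrow> nat \<Rightarrow> (complex mat \<Rightarrow> complex mat) \<Rightarrow> bool" where
  "entanglement_breaking d1 d2 L \<longleftrightarrow> separable_op d1 d2 (choi d1 d2 L)"

end

theory Submission
  imports Defs "HOL-Analysis.L2_Norm"
begin

text \<open>
  The Choi matrix of \<Pi>_\<mu> is \<Sum>_s (\<mu>_s / 2^N) \<sigma>_s^T \<otimes> \<sigma>_s, and the Pauli strings \<sigma>_s are orthogonal,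
  \<langle>\<sigma>_s, \<sigma>_t\<rangle> = 2^N \<delta>_st, for the Hilbert-Schmidt inner product. Pairing a separable decomposition
  \<Sum>_k A_k \<otimes> B_k of it with \<sigma>_t^T \<otimes> \<sigma>_t and with 1 \<otimes> 1 gives
  2^N \<mu>_t = \<Sum>_k \<langle>A_k, \<sigma>_t^T\<rangle> \<langle>B_k, \<sigma>_t\<rangle>  and  \<Sum>_k tr A_k tr B_k = 2^N \<mu>_1..1 = 2^N.
  For positive semidefinite A the entry bound |A_ij|^2 \<le> A_ii A_jj gives \<parallel>A\<parallel>_HS \<le> tr A, so Bessel's inequality
  yields \<Sum>_t |\<langle>A, \<sigma>_t\<rangle>|^2 \<le> 2^N (tr A)^2, and by Cauchy-Schwarz
  \<Sum>_t |\<langle>A_k, \<sigma>_t^T\<rangle>| |\<langle>B_k, \<sigma>_t\<rangle>| \<le> 2^N tr A_k tr B_k. Summing over k gives 2^N \<Sum>_t |\<mu>_t| \<le> 4^N.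
\<close>

lemma sum_lessThan_mult:
  fixes f :: "nat \<Rightarrow> 'a::comm_monoid_add"
  shows "(\<Sum>r<a*m. f r) = (\<Sum>x<a. \<Sum>y<m. f (x*m + y))"
proof -
  have "(\<Sum>r<a*m. f r) = (\<Sum>x<a. sum f {x*m..<x*m + m})"
    by (rule sum.nat_group[symmetric])
  also have "\<dots> = (\<Sum>x<a. \<Sum>y<m. f (x*m + y))"
  proof (rule sum.cong[OF refl])
    fix x
    show "sum f {x*m..<x*m + m} = (\<Sum>y<m. f (x*m + y))"
      using sum.shift_bounds_nat_ivl[of f 0 "x*m" m] by (simp add: atLeast0LessThan add.commute)
  qed
  finally show ?thesis .
qed

lemma block_index_less:
  fixes x y :: nat
  assumes "x < a" "y < m"
  shows "x*m + y < a*m"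
proof -
  have "x*m + y < (x + 1)*m" using assms by simp
  also have "\<dots> \<le> a*m" using assms by (intro mult_right_mono) auto
  finally show ?thesis .
qed

lemma sum_product_4:
  fixes F G :: "nat \<Rightarrow> nat \<Rightarrow> 'a::comm_semiring_0"
  shows "(\<Sum>x<a. \<Sum>y<b. \<Sum>x'<c. \<Sum>y'<e. F x x' * G y y') =
         (\<Sum>x<a. \<Sum>x'<c. F x x') * (\<Sum>y<b. \<Sum>y'<e. G y y')"
proof -
  have "(\<Sum>x<a. \<Sum>y<b. \<Sum>x'<c. \<Sum>y'<e. F x x' * G y y') =
        (\<Sum>x<a. \<Sum>x'<c. \<Sum>y<b. \<Sum>y'<e. F x x' * G y y')"
    by (intro sum.cong refl sum.swap)
  also have "\<dots> = (\<Sum>x<a. \<Sum>x'<c. F x x' * (\<Sum>y<b. \<Sum>y'<e. G y y'))"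
    by (simp add: sum_distrib_left)
  finally show ?thesis
    by (simp add: sum_distrib_right)
qed

subsection \<open>Kronecker products and the Hilbert-Schmidt inner product\<close>

lemma kron_dims [simp]:
  "dim_row (kron A B) = dim_row A * dim_row B" "dim_col (kron A B) = dim_col A * dim_col B"
  by (simp_all add: kron_def)

lemma kron_carrier_mat:
  assumes "A \<in> carrier_mat m1 n1" "B \<in> carrier_mat m2 n2"
  shows "kron A B \<in> carrier_mat (m1 * m2) (n1 * n2)"
  using assms by (intro carrier_matI) auto

lemma index_kron:
  assumes "r < dim_row A * dim_row B" "c < dim_col A * dim_col B"
  shows "kron A B $$ (r,c) = A $$ (r div dim_row B, c div dim_col B) * B $$ (r mod dim_row B, c mod dim_col B)"
  using assms by (simp add: kron_def)

lemma index_kron_block: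
  assumes "x < dim_row A" "x' < dim_col A" "y < dim_row B" "y' < dim_col B"
  shows "kron A B $$ (x * dim_row B + y, x' * dim_col B + y') = A $$ (x,x') * B $$ (y,y')"
  using assms block_index_less[of x "dim_row A" y "dim_row B"] block_index_less[of x' "dim_col A" y' "dim_col B"]
  by (simp add: kron_def)

definition hs_inner :: "complex mat \<Rightarrow> complex mat \<Rightarrow> complex" where
  "hs_inner A B = (\<Sum>i<dim_row A. \<Sum>j<dim_col A. A $$ (i,j) * cnj (B $$ (i,j)))"

lemma hs_inner_kron:
  assumes "C \<in> carrier_mat (dim_row A) (dim_col A)" "D \<in> carrier_mat (dim_row B) (dim_col B)"
  shows "hs_inner (kron A B) (kron C D) = hs_inner A C * hs_inner B D"
proof -
  have "hs_inner (kron A B) (kron C D) =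
     (\<Sum>x<dim_row A. \<Sum>y<dim_row B. \<Sum>x'<dim_col A. \<Sum>y'<dim_col B.
        (A $$ (x,x') * cnj (C $$ (x,x'))) * (B $$ (y,y') * cnj (D $$ (y,y'))))"
    unfolding hs_inner_def kron_dims sum_lessThan_mult
    using assms index_kron_block[of _ A _ _ B] index_kron_block[of _ C _ _ D]
    by (intro sum.cong refl) (simp add: ac_simps)
  then show ?thesis
    unfolding sum_product_4 hs_inner_def .
qed

lemma hs_inner_sum_left:
  assumes "\<And>k. k \<in> K \<Longrightarrow> M k \<in> carrier_mat m n"
  shows "hs_inner (mat m n (\<lambda>(r,c). \<Sum>k\<in>K. M k $$ (r,c))) C = (\<Sum>k\<in>K. hs_inner (M k) C)"
proof -
  have "(\<Sum>k\<in>K. hs_inner (M k) C) = (\<Sum>k\<in>K. \<Sum>i<m. \<Sum>j<n. M k $$ (i,j) * cnj (C $$ (i,j)))"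
    by (intro sum.cong refl) (simp add: hs_inner_def carrier_matD[OF assms])
  then show ?thesis
    by (simp add: hs_inner_def sum_distrib_right sum.swap[where B=K])
qed

lemma hs_inner_smult_left: "hs_inner (a \<cdot>\<^sub>m A) C = a * hs_inner A C"
  by (simp add: hs_inner_def sum_distrib_left ac_simps)

lemma hs_inner_sum_kron:
  assumes "\<And>k. k \<in> K \<Longrightarrow> A k \<in> carrier_mat m1 n1 \<and> B k \<in> carrier_mat m2 n2"
    and "U \<in> carrier_mat m1 n1" "V \<in> carrier_mat m2 n2"
  shows "hs_inner (mat (m1 * m2) (n1 * n2) (\<lambda>(r,c). \<Sum>k\<in>K. kron (A k) (B k) $$ (r,c))) (kron U V) =
    (\<Sum>k\<in>K. hs_inner (A k) U * hs_inner (B k) V)"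
proof -
  have "hs_inner (mat (m1 * m2) (n1 * n2) (\<lambda>(r,c). \<Sum>k\<in>K. kron (A k) (B k) $$ (r,c))) (kron U V) =
      (\<Sum>k\<in>K. hs_inner (kron (A k) (B k)) (kron U V))"
    using assms(1) by (intro hs_inner_sum_left kron_carrier_mat) auto
  also have "\<dots> = (\<Sum>k\<in>K. hs_inner (A k) U * hs_inner (B k) V)"
  proof (rule sum.cong[OF refl])
    fix k
    assume "k \<in> K"
    then show "hs_inner (kron (A k) (B k)) (kron U V) = hs_inner (A k) U * hs_inner (B k) V"
      using assms(1)[of k] assms(2,3) by (auto simp: hs_inner_kron)
  qed
  finally show ?thesis .
qed

lemma mtrace_kron:
  assumes "A \<in> carrier_mat m m" "B \<in> carrier_mat n n"
  shows "mtrace (kron A B) = mtrace A * mtrace B"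
proof -
  have "mtrace (kron A B) = (\<Sum>x<m. \<Sum>y<n. A $$ (x,x) * B $$ (y,y))"
    unfolding mtrace_def using assms
    by (simp add: sum_lessThan_mult) (intro sum.cong refl; use index_kron_block[of _ A _ _ B] in auto)
  then show ?thesis
    using assms by (simp add: mtrace_def sum_product)
qed

lemma hs_inner_transpose:
  assumes "B \<in> carrier_mat (dim_row A) (dim_col A)"
  shows "hs_inner (transpose_mat A) (transpose_mat B) = hs_inner A B"
  unfolding hs_inner_def using assms
  by (simp, subst sum.swap) (intro sum.cong refl; simp)

lemma mtrace_transpose:
  assumes "A \<in> carrier_mat n n"
  shows "mtrace (transpose_mat A) = mtrace A"
  using assms by (simp add: mtrace_def)

lemma hs_inner_one_mat:
  assumes "A \<in> carrier_mat n n"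
  shows "hs_inner A (1\<^sub>m n) = mtrace A"
  using assms by (simp add: hs_inner_def mtrace_def if_distrib[where f=cnj] if_distrib[where f="\<lambda>x. _ * x"] cong: if_cong)

subsection \<open>Pauli strings\<close>

lemma pauli_dims [simp]: "dim_row (pauli i) = 2" "dim_col (pauli i) = 2"
  unfolding pauli_def mat_of_rows_list_def by simp_all

lemma pauli_carrier [simp]: "pauli i \<in> carrier_mat 2 2"
  by (rule carrier_matI) simp_all

lemma pauli_simps:
  "pauli 0 = mat_of_rows_list 2 [[1,0],[0,1]]"
  "pauli (Suc 0) = mat_of_rows_list 2 [[0,1],[1,0]]"
  "pauli 2 = mat_of_rows_list 2 [[1,0],[0,-1]]"
  "pauli 3 = mat_of_rows_list 2 [[0,-\<i>],[\<i>,0]]"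
  unfolding pauli_def
  by (simp_all only: if_True if_False simp_thms numeral_eq_iff semiring_norm zero_neq_numeral numeral_neq_zero
      zero_neq_one one_neq_zero)

lemma less_4_cases:
  fixes i :: nat
  assumes "i < 4"
  shows "i = 0 \<or> i = 1 \<or> i = 2 \<or> i = 3"
  using assms by auto

lemma sum_lessThan_2: "(\<Sum>a<(2::nat). f a) = f 0 + f 1"
  by (simp add: numeral_2_eq_2)

lemma hs_inner_pauli:
  assumes "i < 4" "j < 4"
  shows "hs_inner (pauli i) (pauli j) = (if i = j then 2 else 0)"
  using less_4_cases[OF assms(1)] less_4_cases[OF assms(2)]
  by (elim disjE; hypsubst; simp add: hs_inner_def sum_lessThan_2 pauli_simps mat_of_rows_list_def)

lemma mtrace_pauli:
  assumes "i < 4"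
  shows "mtrace (pauli i) = (if i = 0 then 2 else 0)"
  using less_4_cases[OF assms]
  by (elim disjE; hypsubst; simp add: mtrace_def sum_lessThan_2 pauli_simps mat_of_rows_list_def)

lemma pauli_string_Cons: "pauli_string (i # s) = kron (pauli i) (pauli_string s)"
  by (simp add: pauli_string_def)

lemma pauli_string_carrier: "pauli_string s \<in> carrier_mat (2 ^ length s) (2 ^ length s)"
proof (induction s)
  case Nil
  then show ?case by (simp add: pauli_string_def)
next
  case (Cons i s)
  then show ?case unfolding carrier_mat_def pauli_string_Cons by simp
qed

lemma pauli_string_dims [simp]:
  "dim_row (pauli_string s) = 2 ^ length s" "dim_col (pauli_string s) = 2 ^ length s"
  using pauli_string_carrier[of s] by auto

lemma hs_inner_pauli_string:
  assumes "length s = length t" "set s \<subseteq> {0..<4}" "set t \<subseteq> {0..<4}"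
  shows "hs_inner (pauli_string s) (pauli_string t) = (if s = t then 2 ^ length s else 0)"
  using assms
proof (induction s arbitrary: t)
  case Nil
  then show ?case by (simp add: pauli_string_def hs_inner_def)
next
  case (Cons i s)
  then obtain j t' where t: "t = j # t'" by (cases t) auto
  have "hs_inner (pauli_string (i # s)) (pauli_string t) =
        hs_inner (pauli i) (pauli j) * hs_inner (pauli_string s) (pauli_string t')"
    using Cons.prems pauli_string_carrier[of t'] by (simp add: t pauli_string_Cons hs_inner_kron)
  also have "\<dots> = (if i # s = t then 2 ^ length (i # s) else 0)"
    using Cons by (simp add: t hs_inner_pauli)
  finally show ?case .
qed

lemma mtrace_pauli_string:
  assumes "set s \<subseteq> {0..<4}"
  shows "mtrace (pauli_string s) = (if s = replicate (length s) 0 then 2 ^ length s else 0)"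
  using assms
proof (induction s)
  case Nil
  then show ?case by (simp add: pauli_string_def mtrace_def)
next
  case (Cons i s)
  then show ?case
    using pauli_string_carrier[of s]
    by (simp add: pauli_string_Cons mtrace_kron[where m=2] mtrace_pauli)
qed

subsection \<open>Bessel's inequality\<close>

lemma mult_cnj_self: "z * cnj z = (complex_of_real (cmod z))\<^sup>2"
  by (simp flip: complex_norm_square)

lemma cmod_sum_mult_cnj_le:
  "cmod (\<Sum>p\<in>D. X p * cnj (Y p)) \<le> L2_set (\<lambda>p. cmod (X p)) D * L2_set (\<lambda>p. cmod (Y p)) D"
proof -
  have "cmod (\<Sum>p\<in>D. X p * cnj (Y p)) \<le> (\<Sum>p\<in>D. \<bar>cmod (X p)\<bar> * \<bar>cmod (Y p)\<bar>)"
    using norm_sum[of "\<lambda>p. X p * cnj (Y p)" D] by (simp add: norm_mult)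
  also have "\<dots> \<le> L2_set (\<lambda>p. cmod (X p)) D * L2_set (\<lambda>p. cmod (Y p)) D"
    by (rule L2_set_mult_ineq)
  finally show ?thesis .
qed

lemma bessel_inequality:
  fixes e :: "'t \<Rightarrow> 'p \<Rightarrow> complex" and X :: "'p \<Rightarrow> complex"
  assumes "finite T" "c > 0"
    and orth: "\<And>s t. s \<in> T \<Longrightarrow> t \<in> T \<Longrightarrow>
      (\<Sum>p\<in>D. e s p * cnj (e t p)) = (if s = t then complex_of_real c else 0)"
  shows "(\<Sum>t\<in>T. (cmod (\<Sum>p\<in>D. X p * cnj (e t p)))\<^sup>2) \<le> c * (\<Sum>p\<in>D. (cmod (X p))\<^sup>2)"
proof -
  define co where "co t = (\<Sum>p\<in>D. X p * cnj (e t p))" for t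
  define Y where "Y p = (\<Sum>t\<in>T. co t * e t p)" for p
  define Q where "Q = (\<Sum>t\<in>T. (cmod (co t))\<^sup>2)"
  define H where "H = (\<Sum>p\<in>D. (cmod (X p))\<^sup>2)"
  have "(\<Sum>p\<in>D. X p * cnj (Y p)) = (\<Sum>p\<in>D. \<Sum>t\<in>T. cnj (co t) * (X p * cnj (e t p)))"
    unfolding Y_def by (simp add: cnj_sum sum_distrib_left ac_simps)
  also have "\<dots> = (\<Sum>t\<in>T. cnj (co t) * co t)"
    unfolding co_def by (subst sum.swap) (simp add: sum_distrib_left)
  finally have XY: "(\<Sum>p\<in>D. X p * cnj (Y p)) = complex_of_real Q"
    by (simp add: Q_def mult_cnj_self mult.commute)
  have "(\<Sum>p\<in>D. Y p * cnj (Y p)) = (\<Sum>s\<in>T. \<Sum>t\<in>T. co s * cnj (co t) * (\<Sum>p\<in>D. e s p * cnj (e t p)))"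
    unfolding Y_def
    by (simp add: cnj_sum sum_distrib_left sum_distrib_right ac_simps sum.swap[of _ D])
      (rule sum.cong[OF refl], rule sum.swap)
  also have "\<dots> = (\<Sum>s\<in>T. co s * cnj (co s) * complex_of_real c)"
    using assms(1) by (simp add: orth if_distrib[where f="\<lambda>x. _ * x"] sum.delta cong: if_cong)
  finally have YY: "(\<Sum>p\<in>D. (cmod (Y p))\<^sup>2) = c * Q"
    unfolding Q_def of_real_eq_iff[where 'a=complex, symmetric]
    by (simp add: mult_cnj_self sum_distrib_left ac_simps)
  have "Q = cmod (\<Sum>p\<in>D. X p * cnj (Y p))"
    unfolding XY norm_of_real using Q_def by (simp add: sum_nonneg)
  also have "\<dots> \<le> L2_set (\<lambda>p. cmod (X p)) D * L2_set (\<lambda>p. cmod (Y p)) D"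
    by (rule cmod_sum_mult_cnj_le)
  also have "\<dots> = sqrt (H * (c * Q))"
    by (simp add: L2_set_def H_def YY real_sqrt_mult)
  finally have "Q\<^sup>2 \<le> H * (c * Q)"
    using Q_def by (metis real_sqrt_le_iff real_sqrt_unique sum_nonneg zero_le_power2)
  then have "Q * Q \<le> (c * H) * Q"
    by (simp add: power2_eq_square ac_simps)
  moreover have "0 \<le> Q" "0 \<le> c * H"
    using assms(2) by (simp_all add: Q_def H_def sum_nonneg)
  ultimately have "Q \<le> c * H"
    by (cases "Q = 0") (auto intro: mult_right_le_imp_le)
  then show ?thesis
    unfolding Q_def H_def co_def .
qed

lemma hs_inner_as_sum:
  assumes "A \<in> carrier_mat m n"
  shows "hs_inner A B = (\<Sum>p\<in>{..<m} \<times> {..<n}. A $$ p * cnj (B $$ p))"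
  using assms by (simp add: hs_inner_def sum.cartesian_product split_def)

lemma hs_bessel_inequality:
  assumes "finite T" "c > 0" "A \<in> carrier_mat m n" "\<And>t. t \<in> T \<Longrightarrow> E t \<in> carrier_mat m n"
    and "\<And>s t. s \<in> T \<Longrightarrow> t \<in> T \<Longrightarrow> hs_inner (E s) (E t) = (if s = t then complex_of_real c else 0)"
  shows "(\<Sum>t\<in>T. (cmod (hs_inner A (E t)))\<^sup>2) \<le> c * (\<Sum>i<m. \<Sum>j<n. (cmod (A $$ (i,j)))\<^sup>2)"
proof -
  have "(\<Sum>p\<in>{..<m} \<times> {..<n}. E s $$ p * cnj (E t $$ p)) = (if s = t then complex_of_real c else 0)"
    if "s \<in> T" "t \<in> T" for s t
    using assms(5)[OF that] hs_inner_as_sum[OF assms(4)[OF that(1)]] by simp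
  from bessel_inequality[OF assms(1,2) this, of "\<lambda>p. A $$ p"] show ?thesis
    using assms(3) by (simp add: hs_inner_as_sum sum.cartesian_product split_def)
qed

subsection \<open>Positive semidefinite matrices\<close>

lemma psd_quadratic_form:
  assumes "psd A" "A \<in> carrier_mat d d" "dim_vec v = d"
  shows "Im (\<Sum>k<d. \<Sum>l<d. cnj (v $ k) * A $$ (k,l) * v $ l) = 0 \<and>
         0 \<le> Re (\<Sum>k<d. \<Sum>l<d. cnj (v $ k) * A $$ (k,l) * v $ l)"
  using assms unfolding psd_def Let_def by auto

lemma psd_two_point_form:
  fixes x y :: complex
  assumes "psd A" "A \<in> carrier_mat d d" "i < d" "j < d" "i \<noteq> j"
  defines "q \<equiv> cnj x * A $$ (i,i) * x + cnj x * A $$ (i,j) * y + cnj y * A $$ (j,i) * x + cnj y * A $$ (j,j) * y"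
  shows "Im q = 0 \<and> 0 \<le> Re q"
proof -
  define v where "v = vec d (\<lambda>k. (if k = i then x else 0) + (if k = j then y else 0))"
  have q: "(\<Sum>k<d. \<Sum>l<d. cnj (v $ k) * A $$ (k,l) * v $ l) = q"
    using assms(3-5)
    by (simp add: v_def q_def ring_distribs sum.distrib if_distrib[where f=cnj] if_distrib[where f="\<lambda>z. z * _"]
        if_distrib[where f="\<lambda>z. _ * z"] sum.delta cong: if_cong)
  from psd_quadratic_form[OF assms(1,2), of v] show ?thesis
    unfolding q by (simp add: v_def)
qed

lemma psd_diag:
  assumes "psd A" "A \<in> carrier_mat d d" "i < d"
  shows "Im (A $$ (i,i)) = 0" "0 \<le> Re (A $$ (i,i))"
proof -
  define v where "v = vec d (\<lambda>k. if k = i then 1 else 0 :: complex)"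
  have q: "(\<Sum>k<d. \<Sum>l<d. cnj (v $ k) * A $$ (k,l) * v $ l) = A $$ (i,i)"
    using assms(3) by (simp add: v_def if_distrib[where f=cnj] if_distrib[where f="\<lambda>z. z * _"]
        if_distrib[where f="\<lambda>z. _ * z"] sum.delta cong: if_cong)
  from psd_quadratic_form[OF assms(1,2), of v] show "Im (A $$ (i,i)) = 0" "0 \<le> Re (A $$ (i,i))"
    unfolding q by (simp_all add: v_def)
qed

lemma psd_diag_real:
  assumes "psd A" "A \<in> carrier_mat d d" "i < d"
  shows "complex_of_real (Re (A $$ (i,i))) = A $$ (i,i)"
  using psd_diag(1)[OF assms] by (simp add: complex_eq_iff)

lemma psd_hermitian:
  assumes "psd A" "A \<in> carrier_mat d d" "i < d" "j < d"
  shows "A $$ (j,i) = cnj (A $$ (i,j))"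
proof (cases "i = j")
  case True
  then show ?thesis using psd_diag(1)[OF assms(1-3)] by (simp add: complex_eq_iff)
next
  case False
  have "Im (A $$ (i,j) + A $$ (j,i)) = 0"
    using psd_two_point_form[OF assms False, of 1 1] psd_diag(1)[OF assms(1,2)] assms(3,4) by simp
  moreover have "Re (A $$ (i,j)) = Re (A $$ (j,i))"
    using psd_two_point_form[OF assms False, of 1 \<i>] psd_diag(1)[OF assms(1,2)] assms(3,4) by simp
  ultimately show ?thesis by (simp add: complex_eq_iff)
qed

lemma psd_entry_bound:
  assumes "psd A" "A \<in> carrier_mat d d" "i < d" "j < d"
  shows "(cmod (A $$ (i,j)))\<^sup>2 \<le> Re (A $$ (i,i)) * Re (A $$ (j,j))"
proof (cases "i = j")
  case True
  then show ?thesis using psd_diag(1)[OF assms(1-3)] by (simp only: True cmod_power2) (simp add: power2_eq_square)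
next
  case False
  define a b z where "a = Re (A $$ (i,i))" and "b = Re (A $$ (j,j))" and "z = A $$ (i,j)"
  have a: "0 \<le> a" and b: "0 \<le> b"
    using psd_diag(2)[OF assms(1,2)] assms(3,4) by (simp_all add: a_def b_def)
  have entries: "A $$ (i,i) = complex_of_real a" "A $$ (j,j) = complex_of_real b" "A $$ (j,i) = cnj z"
    using psd_diag_real[OF assms(1,2)] psd_hermitian[OF assms] assms(3,4) by (simp_all add: a_def b_def z_def)
  have form: "0 \<le> Re (cnj x * a * x + cnj x * z * y + cnj y * cnj z * x + cnj y * b * y)" for x y
    using psd_two_point_form[OF assms False, of x y] unfolding entries z_def[symmetric] by simp
  \<comment> \<open>Test vectors adapted to the three cases b > 0, a > 0 and a = b = 0.\<close>
  have "0 \<le> b * (a * b - ((Re z)\<^sup>2 + (Im z)\<^sup>2))"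
    using form[of b "- cnj z"] by (simp add: algebra_simps power2_eq_square)
  moreover have "0 \<le> a * (a * b - ((Re z)\<^sup>2 + (Im z)\<^sup>2))"
    using form[of "- z" a] by (simp add: algebra_simps power2_eq_square)
  moreover have "0 \<le> a + b * ((Re z)\<^sup>2 + (Im z)\<^sup>2) - 2 * ((Re z)\<^sup>2 + (Im z)\<^sup>2)"
    using form[of 1 "- cnj z"] by (simp add: algebra_simps power2_eq_square)
  ultimately have "((Re z)\<^sup>2 + (Im z)\<^sup>2) \<le> a * b"
    using a b by (cases "b > 0"; cases "a > 0") (auto simp: zero_le_mult_iff)
  then show ?thesis by (simp add: a_def b_def z_def cmod_power2)
qed

lemma psd_mtrace:
  assumes "psd A" "A \<in> carrier_mat d d"
  shows "complex_of_real (Re (mtrace A)) = mtrace A" "0 \<le> Re (mtrace A)"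
  using assms psd_diag_real[OF assms] psd_diag(2)[OF assms]
  by (auto simp: mtrace_def Re_sum of_real_sum intro!: sum_nonneg)

lemma psd_hs_norm_le_mtrace:
  assumes "psd A" "A \<in> carrier_mat d d"
  shows "(\<Sum>i<d. \<Sum>j<d. (cmod (A $$ (i,j)))\<^sup>2) \<le> (Re (mtrace A))\<^sup>2"
proof -
  have "(\<Sum>i<d. \<Sum>j<d. (cmod (A $$ (i,j)))\<^sup>2) \<le> (\<Sum>i<d. \<Sum>j<d. Re (A $$ (i,i)) * Re (A $$ (j,j)))"
    using psd_entry_bound[OF assms] by (intro sum_mono) auto
  also have "\<dots> = (Re (mtrace A))\<^sup>2"
    using assms(2) by (simp add: mtrace_def Re_sum power2_eq_square sum_product)
  finally show ?thesis .
qed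

lemma psd_coefficients_L2_bound:
  assumes "finite T" "c > 0" "psd A" "A \<in> carrier_mat d d" "\<And>t. t \<in> T \<Longrightarrow> E t \<in> carrier_mat d d"
    and "\<And>s t. s \<in> T \<Longrightarrow> t \<in> T \<Longrightarrow> hs_inner (E s) (E t) = (if s = t then complex_of_real c else 0)"
  shows "L2_set (\<lambda>t. cmod (hs_inner A (E t))) T \<le> sqrt c * Re (mtrace A)"
proof -
  have "(\<Sum>t\<in>T. (cmod (hs_inner A (E t)))\<^sup>2) \<le> c * (\<Sum>i<d. \<Sum>j<d. (cmod (A $$ (i,j)))\<^sup>2)"
    using assms by (intro hs_bessel_inequality) auto
  also have "\<dots> \<le> c * (Re (mtrace A))\<^sup>2"
    using assms(2) psd_hs_norm_le_mtrace[OF assms(3,4)] by simp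
  finally have "L2_set (\<lambda>t. cmod (hs_inner A (E t))) T \<le> sqrt (c * (Re (mtrace A))\<^sup>2)"
    unfolding L2_set_def by (rule real_sqrt_le_mono)
  then show ?thesis
    using psd_mtrace(2)[OF assms(3,4)] by (simp add: real_sqrt_mult)
qed

lemma finite_idx: "finite (idx N)"
proof -
  have "idx N = {xs. set xs \<subseteq> {0..<4} \<and> length xs = N}" by (auto simp: idx_def)
  then show ?thesis using finite_lists_length_eq[of "{0..<4::nat}" N] by simp
qed

lemma length_idx: "s \<in> idx N \<Longrightarrow> length s = N"
  by (simp add: idx_def)

lemma pauli_string_idx_carrier: "s \<in> idx N \<Longrightarrow> pauli_string s \<in> carrier_mat (2^N) (2^N)"
  using pauli_string_carrier[of s] by (simp add: idx_def)

lemma hs_inner_pauli_string_idx: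
  assumes "s \<in> idx N" "t \<in> idx N"
  shows "hs_inner (pauli_string s) (pauli_string t) = (if s = t then 2^N else 0)"
    "hs_inner (transpose_mat (pauli_string s)) (transpose_mat (pauli_string t)) = (if s = t then 2^N else 0)"
  using assms hs_inner_pauli_string[of s t] hs_inner_transpose[where A="pauli_string s" and B="pauli_string t"]
    pauli_string_carrier[of t]
  by (auto simp: idx_def)

lemma psd_pauli_coefficients_bound:
  assumes "psd A" "A \<in> carrier_mat (2^N) (2^N)" "psd B" "B \<in> carrier_mat (2^N) (2^N)"
  shows "(\<Sum>t\<in>idx N. cmod (hs_inner A (transpose_mat (pauli_string t))) * cmod (hs_inner B (pauli_string t)))
    \<le> 2^N * Re (mtrace A) * Re (mtrace B)"
proof -
  let ?\<alpha> = "\<lambda>t. cmod (hs_inner A (transpose_mat (pauli_string t)))"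
  let ?\<beta> = "\<lambda>t. cmod (hs_inner B (pauli_string t))"
  have "(\<Sum>t\<in>idx N. ?\<alpha> t * ?\<beta> t) \<le> L2_set ?\<alpha> (idx N) * L2_set ?\<beta> (idx N)"
    using L2_set_mult_ineq[of ?\<alpha> ?\<beta> "idx N"] by simp
  also have "\<dots> \<le> (sqrt (2^N) * Re (mtrace A)) * (sqrt (2^N) * Re (mtrace B))"
    using finite_idx pauli_string_idx_carrier hs_inner_pauli_string_idx assms
    by (intro mult_mono psd_coefficients_L2_bound L2_set_nonneg) (auto simp: psd_mtrace(2))
  also have "\<dots> = 2^N * Re (mtrace A) * Re (mtrace B)"
    by (simp add: ac_simps)
  finally show ?thesis .
qed

subsection \<open>The Choi matrix of the Pauli diagonal map\<close>

lemma unit_mat_dims [simp]: "dim_row (unit_mat d i j) = d" "dim_col (unit_mat d i j) = d"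
  by (simp_all add: unit_mat_def)

lemma index_unit_mat: "a < d \<Longrightarrow> b < d \<Longrightarrow> unit_mat d i j $$ (a,b) = (if a = i \<and> b = j then 1 else 0)"
  by (simp add: unit_mat_def)

lemma index_choi:
  assumes "r < d1 * d2" "c < d1 * d2" "\<And>i j. L (unit_mat d1 i j) \<in> carrier_mat d2 d2"
  shows "choi d1 d2 L $$ (r,c) = L (unit_mat d1 (r div d2) (c div d2)) $$ (r mod d2, c mod d2)"
proof -
  have "r div d2 < d1" "c div d2 < d1"
    using assms(1,2) by (simp_all add: less_mult_imp_div_less)
  have "choi d1 d2 L $$ (r,c) = (\<Sum>i<d1. \<Sum>j<d1.
      unit_mat d1 i j $$ (r div d2, c div d2) * L (unit_mat d1 i j) $$ (r mod d2, c mod d2))"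
    using assms(1,2) carrier_matD[OF assms(3)] by (simp add: choi_def index_kron)
  also have "\<dots> = L (unit_mat d1 (r div d2) (c div d2)) $$ (r mod d2, c mod d2)"
  proof -
    have split_conj: "(if P \<and> Q then x else 0) = (if Q then if P then x else 0 else 0)" for P Q and x :: complex
      by simp
    show ?thesis
      using \<open>r div d2 < d1\<close> \<open>c div d2 < d1\<close>
      by (simp add: index_unit_mat if_distrib[where f="\<lambda>z. z * _"] split_conj sum.delta cong: if_cong)
  qed
  finally show ?thesis .
qed

lemma mtrace_mult_unit_mat:
  assumes "P \<in> carrier_mat d d" "i < d" "j < d"
  shows "mtrace (P * unit_mat d i j) = P $$ (j,i)"
proof -
  have "(P * unit_mat d i j) $$ (r,r) = (if r = j then P $$ (r,i) else 0)" if "r < d" for r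
    using assms that
    by (auto simp: unit_mat_def scalar_prod_def if_distrib[where f="\<lambda>x. _ * x"] sum.delta' cong: if_cong)
  then show ?thesis
    using assms by (simp add: mtrace_def)
qed

lemma PiMap_carrier: "PiMap N \<mu> X \<in> carrier_mat (2^N) (2^N)"
  by (simp add: PiMap_def)

lemma choi_PiMap:
  "choi (2^N) (2^N) (PiMap N \<mu>) = mat (2^N * 2^N) (2^N * 2^N) (\<lambda>(r,c).
     \<Sum>s\<in>idx N. kron (complex_of_real (\<mu> s / 2^N) \<cdot>\<^sub>m transpose_mat (pauli_string s)) (pauli_string s) $$ (r,c))"
  (is "_ = ?R")
proof (rule eq_matI)
  fix r c
  assume "r < dim_row ?R" "c < dim_col ?R"
  then have rc: "r < 2^N * 2^N" "c < 2^N * 2^N" by simp_all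
  then have div: "r div 2^N < 2^N" "c div 2^N < 2^N" and mod: "r mod 2^N < 2^N" "c mod 2^N < 2^N"
    by (simp_all add: less_mult_imp_div_less)
  have "choi (2^N) (2^N) (PiMap N \<mu>) $$ (r,c) = PiMap N \<mu> (unit_mat (2^N) (r div 2^N) (c div 2^N)) $$ (r mod 2^N, c mod 2^N)"
    using rc by (simp add: index_choi PiMap_carrier)
  also have "\<dots> = (\<Sum>s\<in>idx N. complex_of_real (\<mu> s / 2^N) *
      pauli_string s $$ (c div 2^N, r div 2^N) * pauli_string s $$ (r mod 2^N, c mod 2^N))"
    using div mod pauli_string_idx_carrier by (simp add: PiMap_def mtrace_mult_unit_mat cong: sum.cong)
  also have "\<dots> = ?R $$ (r,c)"
    using rc div mod pauli_string_idx_carrier by (simp add: index_kron length_idx cong: sum.cong)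
  finally show "choi (2^N) (2^N) (PiMap N \<mu>) $$ (r,c) = ?R $$ (r,c)" .
qed (simp_all add: choi_def)

lemma hs_inner_choi_PiMap:
  assumes "U \<in> carrier_mat (2^N) (2^N)" "V \<in> carrier_mat (2^N) (2^N)"
  shows "hs_inner (choi (2^N) (2^N) (PiMap N \<mu>)) (kron U V) =
    (\<Sum>s\<in>idx N. complex_of_real (\<mu> s / 2^N) * hs_inner (transpose_mat (pauli_string s)) U * hs_inner (pauli_string s) V)"
  unfolding choi_PiMap using assms pauli_string_idx_carrier
  by (subst hs_inner_sum_kron) (auto simp: hs_inner_smult_left)

lemma hs_inner_choi_PiMap_pauli:
  assumes "t \<in> idx N"
  shows "hs_inner (choi (2^N) (2^N) (PiMap N \<mu>)) (kron (transpose_mat (pauli_string t)) (pauli_string t)) =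
    complex_of_real (2^N * \<mu> t)"
proof -
  have "hs_inner (choi (2^N) (2^N) (PiMap N \<mu>)) (kron (transpose_mat (pauli_string t)) (pauli_string t)) =
      (\<Sum>s\<in>idx N. if s = t then complex_of_real (\<mu> s / 2^N) * 2^N * 2^N else 0)"
    using assms pauli_string_idx_carrier[OF assms]
    by (simp add: hs_inner_choi_PiMap hs_inner_pauli_string_idx cong: sum.cong) (rule sum.cong; simp)
  then show ?thesis
    using assms finite_idx by (simp add: sum.delta)
qed

lemma hs_inner_choi_PiMap_one_mat:
  "hs_inner (choi (2^N) (2^N) (PiMap N \<mu>)) (kron (1\<^sub>m (2^N)) (1\<^sub>m (2^N))) =
    complex_of_real (2^N * \<mu> (replicate N 0))"
proof -
  have "complex_of_real (\<mu> s / 2^N) * hs_inner (transpose_mat (pauli_string s)) (1\<^sub>m (2^N))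
      * hs_inner (pauli_string s) (1\<^sub>m (2^N))
    = (if s = replicate N 0 then complex_of_real (\<mu> s / 2^N) * 2^N * 2^N else 0)" if s: "s \<in> idx N" for s
  proof -
    have "mtrace (pauli_string s) = (if s = replicate N 0 then 2^N else 0)"
      using s mtrace_pauli_string[of s] by (simp add: idx_def)
    then show ?thesis
      using pauli_string_idx_carrier[OF s] by (simp add: hs_inner_one_mat mtrace_transpose)
  qed
  moreover have "replicate N 0 \<in> idx N"
    by (simp add: idx_def set_replicate_conv_if)
  ultimately show ?thesis
    using finite_idx by (simp add: hs_inner_choi_PiMap sum.delta cong: sum.cong)
qed

lemma separable_PiMap_coefficient_bound:
  assumes choi: "choi (2^N) (2^N) (PiMap N \<mu>) = mat (2^N * 2^N) (2^N * 2^N) (\<lambda>(r,c). \<Sum>k<n. kron (A k) (B k) $$ (r,c))"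
    and carriers: "\<And>k. k < n \<Longrightarrow> A k \<in> carrier_mat (2^N) (2^N) \<and> B k \<in> carrier_mat (2^N) (2^N)"
    and t: "t \<in> idx N"
  shows "2^N * \<bar>\<mu> t\<bar> \<le>
    (\<Sum>k<n. cmod (hs_inner (A k) (transpose_mat (pauli_string t))) * cmod (hs_inner (B k) (pauli_string t)))"
proof -
  have "complex_of_real (2^N * \<mu> t) =
      hs_inner (choi (2^N) (2^N) (PiMap N \<mu>)) (kron (transpose_mat (pauli_string t)) (pauli_string t))"
    by (rule hs_inner_choi_PiMap_pauli[OF t, symmetric])
  also have "\<dots> = (\<Sum>k<n. hs_inner (A k) (transpose_mat (pauli_string t)) * hs_inner (B k) (pauli_string t))"
    unfolding choi using carriers pauli_string_idx_carrier[OF t] by (intro hs_inner_sum_kron) auto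
  finally have "2^N * \<bar>\<mu> t\<bar> = cmod (\<Sum>k<n. hs_inner (A k) (transpose_mat (pauli_string t)) * hs_inner (B k) (pauli_string t))"
    by (metis abs_mult abs_of_nonneg norm_of_real zero_le_numeral zero_le_power)
  also have "\<dots> \<le> (\<Sum>k<n. cmod (hs_inner (A k) (transpose_mat (pauli_string t))) * cmod (hs_inner (B k) (pauli_string t)))"
    unfolding norm_mult[symmetric] by (rule norm_sum)
  finally show ?thesis .
qed

lemma separable_PiMap_trace:
  assumes choi: "choi (2^N) (2^N) (PiMap N \<mu>) = mat (2^N * 2^N) (2^N * 2^N) (\<lambda>(r,c). \<Sum>k<n. kron (A k) (B k) $$ (r,c))"
    and psd: "\<And>k. k < n \<Longrightarrow> A k \<in> carrier_mat (2^N) (2^N) \<and> psd (A k) \<and> B k \<in> carrier_mat (2^N) (2^N) \<and> psd (B k)"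
  shows "(\<Sum>k<n. Re (mtrace (A k)) * Re (mtrace (B k))) = 2^N * \<mu> (replicate N 0)"
proof -
  have "(\<Sum>k<n. hs_inner (A k) (1\<^sub>m (2^N)) * hs_inner (B k) (1\<^sub>m (2^N))) = complex_of_real (2^N * \<mu> (replicate N 0))"
    using hs_inner_choi_PiMap_one_mat[of N \<mu>] psd unfolding choi by (subst (asm) hs_inner_sum_kron) auto
  moreover have "(\<Sum>k<n. hs_inner (A k) (1\<^sub>m (2^N)) * hs_inner (B k) (1\<^sub>m (2^N))) =
      (\<Sum>k<n. complex_of_real (Re (mtrace (A k)) * Re (mtrace (B k))))"
  proof (rule sum.cong[OF refl])
    fix k
    assume "k \<in> {..<n}"
    then have "A k \<in> carrier_mat (2^N) (2^N)" "psd (A k)" "B k \<in> carrier_mat (2^N) (2^N)" "psd (B k)"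
      using psd by auto
    then show "hs_inner (A k) (1\<^sub>m (2^N)) * hs_inner (B k) (1\<^sub>m (2^N)) =
        complex_of_real (Re (mtrace (A k)) * Re (mtrace (B k)))"
      by (simp add: hs_inner_one_mat psd_mtrace(1))
  qed
  ultimately have "complex_of_real (\<Sum>k<n. Re (mtrace (A k)) * Re (mtrace (B k))) =
      complex_of_real (2^N * \<mu> (replicate N 0))"
    unfolding of_real_sum by simp
  then show ?thesis
    by (simp only: of_real_eq_iff)
qed

theorem mainTheorem4:
  fixes N :: nat and \<mu> :: "nat list \<Rightarrow> real"
  assumes "\<mu> (replicate N 0) = 1"
    and "entanglement_breaking (2^N) (2^N) (PiMap N \<mu>)"
  shows "(\<Sum>is\<in>idx N. \<bar>\<mu> is\<bar>) \<le> 2^N"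
proof -
  from assms(2) obtain n :: nat and A B where
    AB: "\<forall>k<n. A k \<in> carrier_mat (2^N) (2^N) \<and> psd (A k) \<and> B k \<in> carrier_mat (2^N) (2^N) \<and> psd (B k)"
    and choi: "choi (2^N) (2^N) (PiMap N \<mu>) = mat (2^N * 2^N) (2^N * 2^N) (\<lambda>(r,c). \<Sum>k<n. kron (A k) (B k) $$ (r,c))"
    unfolding entanglement_breaking_def separable_op_def by blast
  have "2^N * (\<Sum>t\<in>idx N. \<bar>\<mu> t\<bar>) \<le> (\<Sum>t\<in>idx N. \<Sum>k<n.
      cmod (hs_inner (A k) (transpose_mat (pauli_string t))) * cmod (hs_inner (B k) (pauli_string t)))"
    unfolding sum_distrib_left using AB
    by (intro sum_mono separable_PiMap_coefficient_bound[OF choi]) auto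
  also have "\<dots> \<le> (\<Sum>k<n. 2^N * Re (mtrace (A k)) * Re (mtrace (B k)))"
    unfolding sum.swap[where A="idx N"] using AB
    by (intro sum_mono psd_pauli_coefficients_bound) auto
  also have "\<dots> = 2^N * 2^N"
    using separable_PiMap_trace[OF choi AB[rule_format]] assms(1) by (simp add: sum_distrib_left[symmetric] mult.assoc)
  finally show ?thesis
    by simp
qed

end
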